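(* Let $n\ge3$, $k\ge1$ be integers, $\alpha=n/2-1$, and let $b>0>c$ be real numbers satisfying $$bc=-\frac{(k+1)k(\alpha+k-1)}{(2\alpha+k)(2\alpha+k-1)(\alpha+k+1)},\qquad b+c=-\frac{2\alpha(k+1)^2(\alpha+k-1)}{(2\alpha+k)(2\alpha+k-1)(\alpha+2k+1)}.$$ Then $$q_{k+1}(t):=P_{k+1}^{(n)}(t)+bP_{k-1}^{(n)}(t)=\frac{(\alpha)_{k+1}2^{k+1}}{(2\alpha)_{k+1}}(t-\beta_1)\cdots(t-\beta_{k+1}),$$ where $\beta_1,\dots,\beta_{k+1}$ are distinct, lie in $(-1,1)$, and the set $\{\beta_1,\dots,\beta_{k+1}\}$ is symmetric about the origin.
   Context: $P_i^{(n)}$ is the Gegenbauer polynomial of degree $i$, i.e. the Jacobi polynomial with parameters $(n-3)/2,(n-3)/2$ normalized so that $P_i^{(n)}(1)=1$ ($P_0^{(n)}=1$). $(x)_m=x(x+1)\cdots(x+m-1)$ is the Pochhammer symbol. *)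

theory Defs
  imports "HOL-Computational_Algebra.Polynomial"
begin

text \<open>Gegenbauer polynomial P_i^{(n)} of degree i, i.e. the Jacobi polynomial with
  parameters ((n-3)/2,(n-3)/2) normalized so that P_i^{(n)}(1) = 1.  Defined by the
  standard three-term recurrence for this normalization (alpha = n/2 - 1):
  (i + n - 2) P_{i+1}(t) = (2i + n - 2) t P_i(t) - i P_{i-1}(t),  P_0 = 1, P_1 = t.\<close>
fun gegenbauer :: "nat \<Rightarrow> nat \<Rightarrow> real poly" where
  "gegenbauer n 0 = 1"
| "gegenbauer n (Suc 0) = [:0, 1:]"
| "gegenbauer n (Suc (Suc i)) =
     smult (1 / (real (Suc i) + real n - 2))
       (smult (2 * real (Suc i) + real n - 2) ([:0, 1:] * gegenbauer n (Suc i))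
        - smult (real (Suc i)) (gegenbauer n i))"

end

theory Submission
  imports Defs
begin

(* By induction along the three-term recurrence, the zeros of P_k are simple, lie in (-1,1),
   and P_{k-1} alternates in sign on them.  The polynomial q_{k+1} equals A t P_k - C P_{k-1}
   with A > 0 and C = k/(k+n-2) - b; the hypotheses make b and c the roots of a quadratic that
   is positive at k/(k+n-2) while c < 0, so b < k/(k+n-2) and C > 0.  Then q_{k+1} has the sign
   of -P_{k-1} at the zeros of P_k and the sign of P_{k+1} at the endpoints, so it changes sign
   k+1 times in (-1,1).  The zero set is symmetric because P_{k+1} and P_{k-1} have the same
   parity. *)

subsection \<open>Real polynomials with prescribed sign changes\<close>

lemma poly_eq_smult_prod_distinct_roots:
  fixes p :: "'a::idom poly"
  assumes "degree p = m" and "inj_on x {..<m}" and "\<forall>i<m. poly p (x i) = 0"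
  shows "p = smult (lead_coeff p) (\<Prod>i<m. [:- x i, 1:])"
  using assms
proof (induction m arbitrary: p)
  case 0
  then show ?case by (auto elim!: degree_eq_zeroE)
next
  case (Suc m)
  have "[:- x m, 1:] dvd p"
    using Suc.prems(3) by (simp add: dvd_iff_poly_eq_0)
  then obtain q where pq: "p = [:- x m, 1:] * q" ..
  with Suc.prems(1) have "q \<noteq> 0" by auto
  then have "degree p = degree [:- x m, 1:] + degree q"
    unfolding pq by (intro degree_mult_eq) auto
  with Suc.prems(1) have "degree q = m" by simp
  have "poly q (x i) = 0" if "i < m" for i
  proof -
    have "x i \<noteq> x m" using Suc.prems(2) that by (auto simp: inj_on_def)
    moreover have "poly p (x i) = 0" using Suc.prems(3) that by simp
    ultimately show ?thesis by (simp add: pq)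
  qed
  with \<open>degree q = m\<close> Suc.prems(2) have q: "q = smult (lead_coeff q) (\<Prod>i<m. [:- x i, 1:])"
    by (intro Suc.IH) (auto simp: inj_on_def)
  have "lead_coeff p = lead_coeff [:- x m, 1:] * lead_coeff q"
    unfolding pq by (rule lead_coeff_mult)
  then have lead: "lead_coeff p = lead_coeff q" by simp
  have "p = [:- x m, 1:] * smult (lead_coeff q) (\<Prod>i<m. [:- x i, 1:])"
    unfolding pq using q by (rule arg_cong)
  also have "\<dots> = smult (lead_coeff p) (\<Prod>i<Suc m. [:- x i, 1:])"
    by (simp only: lead prod.lessThan_Suc mult_smult_right mult.commute)
  finally show ?case .
qed

lemma alternating_signs_product_neg:
  fixes a b :: real
  assumes "j < m" and "0 < (-1) ^ (m - j) * a" and "0 < (-1) ^ (m - Suc j) * b"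
  shows "a * b < 0"
proof -
  have "m - j = Suc (m - Suc j)"
    using \<open>j < m\<close> by simp
  with assms(2,3) show ?thesis
    by (cases "even (m - Suc j)") (simp_all add: mult_neg_pos mult_pos_neg)
qed

lemma sign_poly_between_roots:
  fixes x :: "nat \<Rightarrow> real"
  assumes mono: "strict_mono_on {..<m} x" and "L > 0" and "j \<le> m"
    and below: "0 < j \<Longrightarrow> x (j - 1) < t" and above: "j < m \<Longrightarrow> t < x j"
  shows "(-1) ^ (m - j) * poly (smult L (\<Prod>i<m. [:- x i, 1:])) t > 0"
proof -
  have lower_factors: "(\<Prod>i\<in>{0..<j}. t - x i) > 0"
  proof (rule prod_pos)
    fix i assume "i \<in> {0..<j}"
    with mono \<open>j \<le> m\<close> have "x i \<le> x (j - 1)" by (auto intro: strict_mono_on_leD)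
    with below \<open>i \<in> {0..<j}\<close> show "t - x i > 0" by simp
  qed
  have upper_factors: "(\<Prod>i\<in>{j..<m}. x i - t) > 0"
  proof (rule prod_pos)
    fix i assume "i \<in> {j..<m}"
    with mono have "x j \<le> x i" by (auto intro: strict_mono_on_leD)
    with above \<open>i \<in> {j..<m}\<close> show "x i - t > 0" by simp
  qed
  have "(\<Prod>i<m. t - x i) = (\<Prod>i\<in>{0..<j}. t - x i) * (\<Prod>i\<in>{j..<m}. - (x i - t))"
    using \<open>j \<le> m\<close> by (simp add: prod.atLeastLessThan_concat lessThan_atLeast0)
  also have "\<dots> = (-1) ^ (m - j) * ((\<Prod>i\<in>{0..<j}. t - x i) * (\<Prod>i\<in>{j..<m}. x i - t))"
    by (simp only: prod_uminus card_atLeastLessThan mult.left_commute)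
  finally have "(-1) ^ (m - j) * (\<Prod>i<m. t - x i)
      = (\<Prod>i\<in>{0..<j}. t - x i) * (\<Prod>i\<in>{j..<m}. x i - t)"
    by (simp flip: power_add)
  with lower_factors upper_factors \<open>L > 0\<close> show ?thesis
    by (simp add: poly_prod mult.left_commute)
qed

lemma alternating_signs_imp_factorization:
  fixes s :: "real poly" and w :: "nat \<Rightarrow> real"
  assumes "degree s = m"
    and w_step: "\<forall>j<m. w j < w (Suc j)"
    and sign: "\<forall>j\<le>m. (-1) ^ (m - j) * poly s (w j) > 0"
  shows "\<exists>z. s = smult (lead_coeff s) (\<Prod>i<m. [:- z i, 1:]) \<and> strict_mono_on {..<m} z
           \<and> (\<forall>i<m. w i < z i \<and> z i < w (Suc i))"
proof -
  have "\<exists>\<zeta>. j < m \<longrightarrow> w j < \<zeta> \<and> \<zeta> < w (Suc j) \<and> poly s \<zeta> = 0" for j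
  proof (cases "j < m")
    case True
    then have "j \<le> m" and "Suc j \<le> m"
      by simp_all
    then have "poly s (w j) * poly s (w (Suc j)) < 0"
      by (intro alternating_signs_product_neg[OF True] sign[rule_format])
    with w_step True show ?thesis
      using poly_IVT[of "w j" "w (Suc j)" s] by auto
  qed simp
  then obtain z where z: "\<And>j. j < m \<Longrightarrow> w j < z j \<and> z j < w (Suc j) \<and> poly s (z j) = 0"
    by metis
  have mono: "strict_mono_on {..<m} z"
  proof (rule strict_mono_onI)
    fix i j :: nat assume "i \<in> {..<m}" "j \<in> {..<m}" "i < j"
    then have "i < m" "j < m" "Suc i \<le> j" by auto
    have "w (Suc i) \<le> w j"
      by (rule lift_Suc_mono_le_ivl[of "{..<m}" w "Suc i" j])
        (use w_step \<open>j < m\<close> \<open>Suc i \<le> j\<close> in auto)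
    with z[OF \<open>i < m\<close>] z[OF \<open>j < m\<close>] show "z i < z j"
      by linarith
  qed
  have "s = smult (lead_coeff s) (\<Prod>i<m. [:- z i, 1:])"
    using \<open>degree s = m\<close> strict_mono_on_imp_inj_on[OF mono]
    by (rule poly_eq_smult_prod_distinct_roots) (use z in blast)
  moreover have "\<forall>i<m. w i < z i \<and> z i < w (Suc i)"
    using z by simp
  ultimately show ?thesis
    using mono by (intro exI[of _ z] conjI)
qed

lemma degree_lead_coeff_smult_prod_linear:
  fixes x :: "nat \<Rightarrow> 'a::idom"
  assumes "L \<noteq> 0"
  shows "degree (smult L (\<Prod>i<m. [:- x i, 1:])) = m"
    and "lead_coeff (smult L (\<Prod>i<m. [:- x i, 1:])) = L"
proof -
  have "degree (\<Prod>i<m. [:- x i, 1:]) = m"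
    by (simp add: degree_prod_eq_sum_degree)
  moreover have "lead_coeff (\<Prod>i<m. [:- x i, 1:]) = 1"
    by (simp add: lead_coeff_prod)
  ultimately show "degree (smult L (\<Prod>i<m. [:- x i, 1:])) = m"
    and "lead_coeff (smult L (\<Prod>i<m. [:- x i, 1:])) = L"
    using assms by simp_all
qed

lemma degree_lead_coeff_x_mult_diff:
  fixes p r :: "'a::idom poly"
  assumes "degree r \<le> degree p" and "A * lead_coeff p \<noteq> 0"
  shows "degree (smult A ([:0, 1:] * p) - smult C r) = degree p + 1"
    and "lead_coeff (smult A ([:0, 1:] * p) - smult C r) = A * lead_coeff p"
proof -
  let ?s = "smult A ([:0, 1:] * p) - smult C r"
  have "coeff r (degree p + 1) = 0"
    using assms(1) by (intro coeff_eq_0) simp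
  then have coeff_s: "coeff ?s (degree p + 1) = A * lead_coeff p"
    by simp
  have "degree ?s \<le> degree p + 1"
    using assms(1) by (intro degree_diff_le order.trans[OF degree_smult_le]) (auto simp: degree_pCons_le)
  moreover have "coeff ?s (degree p + 1) \<noteq> 0"
    unfolding coeff_s by (rule assms(2))
  ultimately show "degree ?s = degree p + 1"
    by (metis le_antisym le_degree)
  with coeff_s show "lead_coeff ?s = A * lead_coeff p"
    by simp
qed

lemma interlacing_step:
  fixes p r s :: "real poly" and x :: "nat \<Rightarrow> real"
  assumes p: "p = smult L (\<Prod>i<m. [:- x i, 1:])" and "L > 0"
    and x_mono: "strict_mono_on {..<m} x" and x_range: "\<forall>i<m. -1 < x i \<and> x i < 1"
    and r_sign: "\<forall>i<m. (-1) ^ (m - 1 - i) * poly r (x i) > 0" and "degree r \<le> m"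
    and "A > 0" and "C > 0" and s: "s = smult A ([:0, 1:] * p) - smult C r"
    and s_right: "poly s 1 > 0" and s_left: "(-1) ^ (m + 1) * poly s (-1) > 0"
  shows "\<exists>z. s = smult (A * L) (\<Prod>i<m + 1. [:- z i, 1:]) \<and> strict_mono_on {..<m + 1} z
           \<and> (\<forall>i<m + 1. -1 < z i \<and> z i < 1) \<and> (\<forall>i<m + 1. (-1) ^ (m - i) * poly p (z i) > 0)"
proof -
  have "degree p = m" and "lead_coeff p = L"
    using degree_lead_coeff_smult_prod_linear[of L x m] \<open>L > 0\<close> by (simp_all add: p)
  with \<open>degree r \<le> m\<close> \<open>A > 0\<close> \<open>L > 0\<close> have "degree r \<le> degree p" and "A * lead_coeff p \<noteq> 0"
    by simp_all
  from degree_lead_coeff_x_mult_diff[OF this, of C, folded s] \<open>degree p = m\<close> \<open>lead_coeff p = L\<close>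
  have deg_s: "degree s = m + 1" and "lead_coeff s = A * L"
    by simp_all
  define w where "w j = (if j = 0 then -1 else if j \<le> m then x (j - 1) else 1)" for j
  have w_bounds: "-1 \<le> w j \<and> w j \<le> 1" for j
    using x_range by (auto simp: w_def less_imp_le)
  have w_step: "\<forall>j<m + 1. w j < w (Suc j)"
    using x_range by (auto simp: w_def intro: strict_mono_onD[OF x_mono])
  have p_roots: "poly p (x i) = 0" if "i < m" for i
    by (simp add: p poly_prod) (use that in blast)
  have s_sign: "(-1) ^ (m + 1 - j) * poly s (w j) > 0" if "j \<le> m + 1" for j
  proof -
    have "j = 0 \<or> j = m + 1 \<or> 0 < j \<and> j \<le> m"
      using that by arith
    then consider (left) "j = 0" | (right) "j = m + 1" | (root) "0 < j" "j \<le> m"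
      by blast
    then show ?thesis
    proof cases
      case left
      with s_left show ?thesis by (simp add: w_def)
    next
      case right
      with s_right show ?thesis by (simp add: w_def)
    next
      case root
      then have "j - 1 < m" and "w j = x (j - 1)"
        by (simp_all add: w_def)
      from p_roots[OF \<open>j - 1 < m\<close>] have "poly s (w j) = - C * poly r (x (j - 1))"
        by (simp add: s \<open>w j = x (j - 1)\<close>)
      moreover have "(-1 :: real) ^ (m + 1 - j) = - ((-1) ^ (m - j))"
        using root by (simp add: Suc_diff_le)
      moreover have "(-1) ^ (m - j) * poly r (x (j - 1)) > 0"
        using r_sign[rule_format, OF \<open>j - 1 < m\<close>] root by simp
      ultimately show ?thesis
        using \<open>C > 0\<close> by (simp add: mult.left_commute)
    qed
  qed
  have "\<forall>j\<le>m + 1. (-1) ^ (m + 1 - j) * poly s (w j) > 0"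
    using s_sign by blast
  from alternating_signs_imp_factorization[OF deg_s w_step this]
  have "\<exists>z. s = smult (A * L) (\<Prod>i<m + 1. [:- z i, 1:]) \<and> strict_mono_on {..<m + 1} z
      \<and> (\<forall>i<m + 1. w i < z i \<and> z i < w (Suc i))"
    by (simp only: \<open>lead_coeff s = A * L\<close>)
  then obtain z where z: "s = smult (A * L) (\<Prod>i<m + 1. [:- z i, 1:])" "strict_mono_on {..<m + 1} z"
    and z_between: "\<forall>i<m + 1. w i < z i \<and> z i < w (Suc i)"
    by blast
  have z_range: "-1 < z i \<and> z i < 1" if "i < m + 1" for i
    using z_between[rule_format, OF that] w_bounds[of i] w_bounds[of "Suc i"] by linarith
  have p_sign: "(-1) ^ (m - j) * poly p (z j) > 0" if "j < m + 1" for j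
  proof -
    have "w j < z j" and "z j < w (Suc j)"
      using z_between that by auto
    with that show ?thesis
      unfolding p by (intro sign_poly_between_roots[OF x_mono \<open>L > 0\<close>]) (simp_all add: w_def)
  qed
  show ?thesis
    using z z_range p_sign by (intro exI[of _ z]) simp
qed

lemma symmetric_roots_of_parity:
  fixes z :: "nat \<Rightarrow> real"
  assumes p: "p = smult L (\<Prod>i<m. [:- z i, 1:])" and "L \<noteq> 0"
    and parity: "\<And>t. poly p (- t) = (-1) ^ d * poly p t"
  shows "\<forall>i<m. \<exists>j<m. z j = - z i"
proof (intro allI impI)
  fix i assume "i < m"
  then have "poly p (z i) = 0"
    by (auto simp: p poly_prod)
  then have "poly p (- z i) = 0"
    by (simp add: parity)
  then show "\<exists>j<m. z j = - z i"
    using \<open>L \<noteq> 0\<close> by (force simp: p poly_prod)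
qed

subsection \<open>Gegenbauer polynomials\<close>

lemma gegenbauer_Suc:
  assumes "m \<ge> 1"
  shows "gegenbauer n (Suc m) =
    smult ((2 * real m + real n - 2) / (real m + real n - 2)) ([:0, 1:] * gegenbauer n m)
    - smult (real m / (real m + real n - 2)) (gegenbauer n (m - 1))"
proof -
  obtain i where "m = Suc i" using assms by (cases m) auto
  then show ?thesis by (simp add: smult_diff_right divide_inverse mult.commute)
qed

lemma degree_gegenbauer_le: "degree (gegenbauer n m) \<le> m"
proof (induction n m rule: gegenbauer.induct)
  case (3 n i)
  have "degree ([:0, 1:] * gegenbauer n (Suc i)) \<le> Suc (Suc i)"
    using 3 by (intro order.trans[OF degree_mult_le]) simp
  moreover have "degree (gegenbauer n i) \<le> Suc (Suc i)"
    using 3 by simp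
  ultimately show ?case
    unfolding gegenbauer.simps
    by (intro order.trans[OF degree_smult_le] degree_diff_le order.trans[OF degree_smult_le])
qed auto

lemma poly_gegenbauer_minus: "poly (gegenbauer n m) (- t) = (-1) ^ m * poly (gegenbauer n m) t"
  by (induction n m rule: gegenbauer.induct) (auto simp: algebra_simps)

lemma poly_gegenbauer_1: "n \<ge> 2 \<Longrightarrow> poly (gegenbauer n m) 1 = 1"
  by (induction n m rule: gegenbauer.induct) (auto simp: field_simps)

lemma poly_gegenbauer_minus_1: "n \<ge> 2 \<Longrightarrow> poly (gegenbauer n m) (-1) = (-1) ^ m"
  using poly_gegenbauer_minus[of n m 1] by (simp add: poly_gegenbauer_1)

definition gegenbauer_lead :: "nat \<Rightarrow> nat \<Rightarrow> real" where
  "gegenbauer_lead n m =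
     pochhammer (real n / 2 - 1) m * 2 ^ m / pochhammer (2 * (real n / 2 - 1)) m"

lemma gegenbauer_lead_pos: "n \<ge> 3 \<Longrightarrow> gegenbauer_lead n m > 0"
  by (simp add: gegenbauer_lead_def pochhammer_pos)

lemma gegenbauer_lead_Suc:
  assumes "n \<ge> 3"
  shows "gegenbauer_lead n (Suc m)
           = (2 * real m + real n - 2) / (real m + real n - 2) * gegenbauer_lead n m"
proof -
  define a where "a = real n / 2 - 1"
  have "pochhammer (2 * a) m \<noteq> 0" and "2 * a + real m \<noteq> 0"
    using assms pochhammer_pos[of "2 * a" m] by (auto simp: a_def)
  moreover have "2 * real m + real n - 2 = 2 * (a + real m)" and "real m + real n - 2 = 2 * a + real m"
    by (simp_all add: a_def)
  ultimately show ?thesis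
    unfolding gegenbauer_lead_def a_def[symmetric] by (simp add: pochhammer_Suc field_simps)
qed

lemma gegenbauer_interlacing_roots:
  assumes "n \<ge> 3" and "m \<ge> 1"
  shows "\<exists>x. gegenbauer n m = smult (gegenbauer_lead n m) (\<Prod>i<m. [:- x i, 1:])
           \<and> strict_mono_on {..<m} x \<and> (\<forall>i<m. -1 < x i \<and> x i < 1)
           \<and> (\<forall>i<m. (-1) ^ (m - 1 - i) * poly (gegenbauer n (m - 1)) (x i) > 0)"
  using \<open>m \<ge> 1\<close>
proof (induction m rule: nat_induct_at_least)
  case base
  have "gegenbauer_lead n 1 = 1"
    using \<open>n \<ge> 3\<close> by (simp add: gegenbauer_lead_def)
  then show ?case by (intro exI[of _ "\<lambda>_. 0"]) (auto simp: strict_mono_on_def)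
next
  case (Suc m)
  then obtain x where x: "gegenbauer n m = smult (gegenbauer_lead n m) (\<Prod>i<m. [:- x i, 1:])"
    "strict_mono_on {..<m} x" "\<forall>i<m. -1 < x i \<and> x i < 1"
    "\<forall>i<m. (-1) ^ (m - 1 - i) * poly (gegenbauer n (m - 1)) (x i) > 0"
    by blast
  have "(-1) ^ (m + 1) * poly (gegenbauer n (Suc m)) (-1) > 0"
    using \<open>n \<ge> 3\<close> by (simp add: poly_gegenbauer_minus_1 flip: power_add)
  from interlacing_step[OF x(1) gegenbauer_lead_pos x(2-4) degree_gegenbauer_le[THEN le_trans]
      _ _ gegenbauer_Suc[OF \<open>m \<ge> 1\<close>] _ this]
  show ?case
    using \<open>n \<ge> 3\<close> \<open>m \<ge> 1\<close> by (simp add: gegenbauer_lead_Suc poly_gegenbauer_1)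
qed

lemma larger_root_lt_ratio:
  fixes a k b c :: real
  assumes "a > 0" and "k \<ge> 1" and "c < 0"
    and bc: "b * c = - ((k + 1) * k * (a + k - 1)) / ((2 * a + k) * (2 * a + k - 1) * (a + k + 1))"
    and b_plus_c: "b + c = - (2 * a * (k + 1)^2 * (a + k - 1)) /
                 ((2 * a + k) * (2 * a + k - 1) * (a + 2 * k + 1))"
  shows "b < k / (k + 2 * a)"
proof -
  define K where "K = k / (k + 2 * a)"
  have "(K - b) * (K - c) = K^2 - (b + c) * K + b * c"
    by (simp add: algebra_simps power2_eq_square)
  also have "\<dots> = 2 * a * k^2 * (k + 2) * (a + k)^2 /
      ((k + 2 * a)^2 * (2 * a + k - 1) * (a + 2 * k + 1) * (a + k + 1))"
  proof -
    \<comment> \<open>With the denominators abstracted, \<open>field_simps\<close> can clear them.\<close>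
    define d1 d2 d3 d4 where "d1 = 2 * a + k" and "d2 = 2 * a + k - 1"
      and "d3 = a + 2 * k + 1" and "d4 = a + k + 1"
    have "d1 \<noteq> 0" "d2 \<noteq> 0" "d3 \<noteq> 0" "d4 \<noteq> 0"
      using assms by (simp_all add: d1_def d2_def d3_def d4_def)
    then have "(k / d1)^2 - (- (2 * a * (k + 1)^2 * (a + k - 1)) / (d1 * d2 * d3)) * (k / d1)
        + (- ((k + 1) * k * (a + k - 1)) / (d1 * d2 * d4))
      = 2 * a * k^2 * (k + 2) * (a + k)^2 / (d1^2 * d2 * d3 * d4)"
      by (simp add: field_simps power2_eq_square) (unfold d1_def d2_def d3_def d4_def, algebra)
    then show ?thesis
      unfolding K_def bc b_plus_c by (simp add: d1_def d2_def d3_def d4_def add.commute)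
  qed
  also have "\<dots> > 0"
    using assms by (intro divide_pos_pos mult_pos_pos) auto
  finally have "(K - b) * (K - c) > 0" .
  moreover have "K > 0"
    using assms by (simp add: K_def)
  then have "K - c > 0"
    using \<open>c < 0\<close> by linarith
  ultimately show ?thesis
    by (simp add: K_def zero_less_mult_iff)
qed

lemma poly_gegenbauer_perturbed_minus:
  assumes "k \<ge> 1"
  shows "poly (gegenbauer n (k + 1) + smult b (gegenbauer n (k - 1))) (- t)
           = (-1) ^ (k + 1) * poly (gegenbauer n (k + 1) + smult b (gegenbauer n (k - 1))) t"
proof -
  have "(-1 :: real) ^ (k - 1) = (-1) ^ (k + 1)"
    using assms by (cases k) auto
  then show ?thesis
    by (simp add: poly_gegenbauer_minus algebra_simps)
qed

lemma gegenbauer_perturbed_real_roots: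
  assumes "n \<ge> 3" and "k \<ge> 1" and "-1 < b" and "b < real k / (real k + real n - 2)"
  shows "\<exists>\<beta>. gegenbauer n (k + 1) + smult b (gegenbauer n (k - 1))
             = smult (gegenbauer_lead n (k + 1)) (\<Prod>i<k + 1. [:- \<beta> i, 1:])
           \<and> strict_mono_on {..<k + 1} \<beta> \<and> (\<forall>i<k + 1. -1 < \<beta> i \<and> \<beta> i < 1)"
proof -
  define q where "q = gegenbauer n (k + 1) + smult b (gegenbauer n (k - 1))"
  define A where "A = (2 * real k + real n - 2) / (real k + real n - 2)"
  define C where "C = real k / (real k + real n - 2) - b"
  have "A > 0" and "C > 0"
    using assms by (simp_all add: A_def C_def)
  have q_rec: "q = smult A ([:0, 1:] * gegenbauer n k) - smult C (gegenbauer n (k - 1))"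
    using gegenbauer_Suc[OF \<open>k \<ge> 1\<close>, of n]
    by (simp add: q_def A_def C_def smult_diff_left algebra_simps)
  have "poly q 1 > 0"
    using assms by (simp add: q_def poly_gegenbauer_1)
  moreover from this have "(-1) ^ (k + 1) * poly q (-1) > 0"
    using poly_gegenbauer_perturbed_minus[OF \<open>k \<ge> 1\<close>, of n b 1]
    by (simp add: q_def flip: power_add)
  moreover obtain x where x: "gegenbauer n k = smult (gegenbauer_lead n k) (\<Prod>i<k. [:- x i, 1:])"
    "strict_mono_on {..<k} x" "\<forall>i<k. -1 < x i \<and> x i < 1"
    "\<forall>i<k. (-1) ^ (k - 1 - i) * poly (gegenbauer n (k - 1)) (x i) > 0"
    using gegenbauer_interlacing_roots[OF \<open>n \<ge> 3\<close> \<open>k \<ge> 1\<close>] by blast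
  moreover have "degree (gegenbauer n (k - 1)) \<le> k"
    using degree_gegenbauer_le[of n "k - 1"] by simp
  ultimately have "\<exists>\<beta>. q = smult (A * gegenbauer_lead n k) (\<Prod>i<k + 1. [:- \<beta> i, 1:])
      \<and> strict_mono_on {..<k + 1} \<beta> \<and> (\<forall>i<k + 1. -1 < \<beta> i \<and> \<beta> i < 1)"
    using interlacing_step[OF x(1) gegenbauer_lead_pos[OF \<open>n \<ge> 3\<close>] x(2-4) _ \<open>A > 0\<close> \<open>C > 0\<close> q_rec]
    by blast
  moreover have "A * gegenbauer_lead n k = gegenbauer_lead n (k + 1)"
    using gegenbauer_lead_Suc[OF \<open>n \<ge> 3\<close>, of k] by (simp add: A_def)
  ultimately show ?thesis
    unfolding q_def by simp
qed

theorem lemma4p11: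
  fixes n k :: nat and b c :: real
  defines "\<alpha> \<equiv> real n / 2 - 1"
  assumes "n \<ge> 3" and "k \<ge> 1"
    and "b > 0" and "c < 0"
    and "b * c = - ((real k + 1) * real k * (\<alpha> + real k - 1)) /
                 ((2 * \<alpha> + real k) * (2 * \<alpha> + real k - 1) * (\<alpha> + real k + 1))"
    and "b + c = - (2 * \<alpha> * (real k + 1)^2 * (\<alpha> + real k - 1)) /
                 ((2 * \<alpha> + real k) * (2 * \<alpha> + real k - 1) * (\<alpha> + 2 * real k + 1))"
  shows "\<exists>\<beta> :: nat \<Rightarrow> real.
           gegenbauer n (k + 1) + smult b (gegenbauer n (k - 1)) =
             smult (pochhammer \<alpha> (k + 1) * 2 ^ (k + 1) / pochhammer (2 * \<alpha>) (k + 1))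
               (\<Prod>i<k + 1. [:- \<beta> i, 1:])
           \<and> inj_on \<beta> {..<k + 1}
           \<and> (\<forall>i<k + 1. -1 < \<beta> i \<and> \<beta> i < 1)
           \<and> (\<forall>i<k + 1. \<exists>j<k + 1. \<beta> j = - \<beta> i)"
proof -
  have "\<alpha> > 0" and "real k + 2 * \<alpha> = real k + real n - 2"
    using \<open>n \<ge> 3\<close> by (simp_all add: \<alpha>_def)
  with larger_root_lt_ratio[OF _ _ \<open>c < 0\<close> assms(6,7)] \<open>k \<ge> 1\<close>
  have "b < real k / (real k + real n - 2)"
    by simp
  with assms obtain \<beta> where \<beta>:
      "gegenbauer n (k + 1) + smult b (gegenbauer n (k - 1))
         = smult (gegenbauer_lead n (k + 1)) (\<Prod>i<k + 1. [:- \<beta> i, 1:])"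
      "strict_mono_on {..<k + 1} \<beta>" "\<forall>i<k + 1. -1 < \<beta> i \<and> \<beta> i < 1"
    using gegenbauer_perturbed_real_roots[of n k b] by auto
  moreover have "gegenbauer_lead n (k + 1) \<noteq> 0"
    using gegenbauer_lead_pos[OF \<open>n \<ge> 3\<close>, of "k + 1"] by simp
  then have "\<forall>i<k + 1. \<exists>j<k + 1. \<beta> j = - \<beta> i"
    by (rule symmetric_roots_of_parity[OF \<beta>(1) _ poly_gegenbauer_perturbed_minus[OF \<open>k \<ge> 1\<close>]])
  moreover have "gegenbauer_lead n (k + 1)
      = pochhammer \<alpha> (k + 1) * 2 ^ (k + 1) / pochhammer (2 * \<alpha>) (k + 1)"
    by (simp add: gegenbauer_lead_def \<alpha>_def)
  ultimately show ?thesis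
    using strict_mono_on_imp_inj_on by metis
qed

end
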